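(* Let $R:K\to H$ be an object of $\mathcal C'$. Then $(K,\cdot_K,1_K,\Delta,\epsilon,S_K,\rightharpoonup_R)$ with $a\rightharpoonup_R b:=R(a)\rightharpoonup b$ is a Yetter--Drinfeld post-Hopf algebra, and sending a morphism $(f,g)$ of $\mathcal C'$ to $g$ yields a functor $\mathsf R':\mathcal C'\to\mathcal{YD}\mathrm{PH}(\mathrm{Vec}_\Bbbk)$. Moreover $\mathsf R'$ is right adjoint to the functor $L:\mathcal{YD}\mathrm{PH}(\mathrm{Vec}_\Bbbk)\to\mathcal C'$ sending $(H,\rightharpoonup)$ to $\mathrm{Id}_H:H\to H_\rightharpoonup$ and $g$ to $(g,g)$: for all objects there is a natural bijection $\mathrm{Hom}_{\mathcal C'}\big(L(H',\rightharpoonup'),\,R\big)\cong\mathrm{Hom}_{\mathcal{YD}\mathrm{PH}}\big((H',\rightharpoonup'),\,\mathsf R'(R)\big)$, given by $(f,g)\mapsto g$ with inverse $g\mapsto(R\circ g,\,g)$.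
   Context: Conventions: $\Bbbk$ is a field; algebras are associative unital, coalgebras coassociative counital; Sweedler notation $\Delta(c)=c_1\otimes c_2$ (summation omitted), iterated as $c_1\otimes c_2\otimes c_3$ etc.; $H\otimes H$ carries the tensor product coalgebra structure. Definition (Yetter--Drinfeld post-Hopf algebra). A tuple $(H,\cdot,1,\Delta,\epsilon,S,\rightharpoonup)$ where $(H,\cdot,1)$ is an algebra, $(H,\Delta,\epsilon)$ is a coalgebra on the same vector space, $S:H\to H$ is linear with $x_1\cdot S(x_2)=S(x_1)\cdot x_2=\epsilon(x)1$ for all $x$, and $\rightharpoonup:H\otimes H\to H$ is a coalgebra morphism, such that for all $x,y,z\in H$: (P1) $x\rightharpoonup(y\cdot z)=(x_1\rightharpoonup y)\cdot(x_2\rightharpoonup z)$; (P2) $x\rightharpoonup(y\rightharpoonup z)=\big(x_1\cdot(x_2\rightharpoonup y)\big)\rightharpoonup z$; (P3) the map $\alpha_\rightharpoonup:H\to\mathrm{End}(H)$, $\alpha_\rightharpoonup(x)(y)=x\rightharpoonup y$, is convolution invertible, i.e. there is $\beta_\rightharpoonup:H\to\mathrm{End}(H)$ with $\alpha_\rightharpoonup(x_1)\circ\beta_\rightharpoonup(x_2)=\beta_\rightharpoonup(x_1)\circ\alpha_\rightharpoonup(x_2)=\epsilon(x)\mathrm{Id}_H$; (P4) $\epsilon(a\cdot b)=\epsilon(a)\epsilon(b)$, $\epsilon(1)=1_\Bbbk$, $\Delta(1)=1\otimes 1$; (P5) $\Delta(x\cdot y)=\Big(x_1\cdot\alpha_\rightharpoonup(x_2)\big(\beta_\rightharpoonup(x_4)(y_1)\big)\Big)\otimes(x_3\cdot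 y_2)$; (P6) setting $x\bullet_\rightharpoonup y:=x_1\cdot(x_2\rightharpoonup y)$, $S_\rightharpoonup(x):=\beta_\rightharpoonup(x_1)(S(x_2))$ and $x\leftharpoonup y:=\big(S_\rightharpoonup(x_1\rightharpoonup y_1)\bullet_\rightharpoonup x_2\big)\bullet_\rightharpoonup y_2$, one has $\Delta(S_\rightharpoonup(x))=S_\rightharpoonup(x_2)\otimes S_\rightharpoonup(x_1)$ and $(x_1\rightharpoonup y_1)\otimes(x_2\leftharpoonup y_2)=(x_2\rightharpoonup y_2)\otimes(x_1\leftharpoonup y_1)$. A morphism of Yetter--Drinfeld post-Hopf algebras $(H,\rightharpoonup)\to(H',\rightharpoonup')$ is an algebra and coalgebra morphism $g$ with $g(x\rightharpoonup y)=g(x)\rightharpoonup' g(y)$; these form $\mathcal{YD}\mathrm{PH}(\mathrm{Vec}_\Bbbk)$. The subadjacent Hopf algebra is $H_\rightharpoonup=(H,\bullet_\rightharpoonup,1,\Delta,\epsilon,S_\rightharpoonup)$, and $H$ is a Hopf monoid in ${}^{H_\rightharpoonup}_{H_\rightharpoonup}\mathcal{YD}$ via action $\rightharpoonup$ and coaction $a\mapsto a_1\bullet_\rightharpoonup S_\rightharpoonup(a_3)\otimes a_2$. Yetter--Drinfeld modules: for a Hopf algebra $A$ with antipode $T$, a left-left Yetter--Drinfeld module is a left $A$-module $(V,\triangleright)$ and left $A$-comodule $\rho(v)=v_{-1}\otimes v_0$ with $\rho(a\triangleright v)=a_1v_{-1}T(a_3)\otimes a_2\triangleright v_0$; these form the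 braided monoidal category ${}^A_A\mathcal{YD}$ with braiding $\sigma(v\otimes w)=v_{-1}\triangleright w\otimes v_0$. A bimonoid in ${}^A_A\mathcal{YD}$ is an object with algebra and coalgebra structure maps in ${}^A_A\mathcal{YD}$, $\epsilon$ multiplicative, $\epsilon(1)=1$, $\Delta(1)=1\otimes1$, and $\Delta\circ m=(m\otimes m)(\mathrm{Id}\otimes\sigma\otimes\mathrm{Id})(\Delta\otimes\Delta)$; a Hopf monoid is a bimonoid with antipode. Definition (Yetter--Drinfeld relative pre-Rota--Baxter operator). Let $(H,\cdot,1,\Delta,\epsilon,S_H)$ be a Hopf algebra and $(K,\cdot_K,1_K,\Delta,\epsilon)$ a bimonoid in ${}^H_H\mathcal{YD}$ with $H$-action $\rightharpoonup$. A coalgebra morphism $R:K\to H$ is a Yetter--Drinfeld relative pre-Rota--Baxter operator if for all $a,b\in K$: (RB1) $R(a)\cdot R(b)=R\big(a_1\cdot_K(R(a_2)\rightharpoonup b)\big)$; (RB2) $S_HR(R(a_1)\rightharpoonup b_1)\cdot R(a_2)\cdot R(b_2)\otimes R(R(a_3)\rightharpoonup b_3)=S_HR(R(a_2)\rightharpoonup b_2)\cdot R(a_3)\cdot R(b_3)\otimes R(R(a_1)\rightharpoonup b_1)$. A morphism from $R:K\to H$ to $R':K'\to H'$ is a pair $(f:H\to H',g:K\to K')$ of algebra and coalgebra morphisms with $fR=R'g$ and $g(h\rightharpoonup k)=f(h)\rightharpoonup' g(k)$. $\mathcal C'$ is the full subcategory of Yetter--Drinfeld relative pre-Rota--Baxter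 operators whose objects are the injective $R:K\to H$ such that $K$ is a Hopf monoid in ${}^H_H\mathcal{YD}$ (with antipode $S_K$) and the $H$-coaction on $K$ is $a\mapsto R(a_1)\cdot S_H(R(a_3))\otimes a_2$. (For $(H,\rightharpoonup)$ a Yetter--Drinfeld post-Hopf algebra, $\mathrm{Id}_H:H\to H_\rightharpoonup$ is an object of $\mathcal C'$.) *)

theory Defs
  imports Complex_Main
begin

text \<open>An element of a tensor product V1 (x) ... (x) Vn is represented by
a finite list of tuples (a sum of pure tensors); two such lists denote the same
tensor iff every multilinear functional V1 x ... x Vn -> k takes the same value
on them (this characterises equality in the tensor product over a field).\<close>

definition lin :: "('r::field \<Rightarrow> 'a::ab_group_add \<Rightarrow> 'a) \<Rightarrow> ('r \<Rightarrow> 'b::ab_group_add \<Rightarrow> 'b) \<Rightarrow> ('a \<Rightarrow> 'b) \<Rightarrow> bool" where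
  "lin s1 s2 f \<longleftrightarrow> (\<forall>x y. f (x + y) = f x + f y) \<and> (\<forall>c x. f (s1 c x) = s2 c (f x))"

definition bilin :: "('r::field \<Rightarrow> 'a::ab_group_add \<Rightarrow> 'a) \<Rightarrow> ('r \<Rightarrow> 'b::ab_group_add \<Rightarrow> 'b)
    \<Rightarrow> ('r \<Rightarrow> 'c::ab_group_add \<Rightarrow> 'c) \<Rightarrow> ('a \<Rightarrow> 'b \<Rightarrow> 'c) \<Rightarrow> bool" where
  "bilin s1 s2 s3 f \<longleftrightarrow> (\<forall>y. lin s1 s3 (\<lambda>x. f x y)) \<and> (\<forall>x. lin s2 s3 (f x))"

definition trilin :: "('r::field \<Rightarrow> 'a::ab_group_add \<Rightarrow> 'a) \<Rightarrow> ('r \<Rightarrow> 'b::ab_group_add \<Rightarrow> 'b)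
    \<Rightarrow> ('r \<Rightarrow> 'c::ab_group_add \<Rightarrow> 'c) \<Rightarrow> ('a \<Rightarrow> 'b \<Rightarrow> 'c \<Rightarrow> 'r) \<Rightarrow> bool" where
  "trilin s1 s2 s3 f \<longleftrightarrow> (\<forall>y z. lin s1 (*) (\<lambda>x. f x y z)) \<and> (\<forall>x z. lin s2 (*) (\<lambda>y. f x y z))
      \<and> (\<forall>x y. lin s3 (*) (\<lambda>z. f x y z))"

definition teq2 :: "('r::field \<Rightarrow> 'a::ab_group_add \<Rightarrow> 'a) \<Rightarrow> ('r \<Rightarrow> 'b::ab_group_add \<Rightarrow> 'b)
    \<Rightarrow> ('a \<times> 'b) list \<Rightarrow> ('a \<times> 'b) list \<Rightarrow> bool" where
  "teq2 s1 s2 xs ys \<longleftrightarrow> (\<forall>\<phi>. bilin s1 s2 (*) \<phi> \<longrightarrow>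
      sum_list (map (\<lambda>(a,b). \<phi> a b) xs) = sum_list (map (\<lambda>(a,b). \<phi> a b) ys))"

definition teq3 :: "('r::field \<Rightarrow> 'a::ab_group_add \<Rightarrow> 'a) \<Rightarrow> ('r \<Rightarrow> 'b::ab_group_add \<Rightarrow> 'b)
    \<Rightarrow> ('r \<Rightarrow> 'c::ab_group_add \<Rightarrow> 'c) \<Rightarrow> ('a \<times> 'b \<times> 'c) list \<Rightarrow> ('a \<times> 'b \<times> 'c) list \<Rightarrow> bool" where
  "teq3 s1 s2 s3 xs ys \<longleftrightarrow> (\<forall>\<phi>. trilin s1 s2 s3 \<phi> \<longrightarrow>
      sum_list (map (\<lambda>(a,b,c). \<phi> a b c) xs) = sum_list (map (\<lambda>(a,b,c). \<phi> a b c) ys))"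

text \<open>de x is a list of pairs representing Delta(x) = x_1 (x) x_2 (Sweedler).\<close>
record ('r, 'v) hs =
  sc :: "'r \<Rightarrow> 'v \<Rightarrow> 'v"
  mu :: "'v \<Rightarrow> 'v \<Rightarrow> 'v"
  un :: "'v"
  de :: "'v \<Rightarrow> ('v \<times> 'v) list"
  ep :: "'v \<Rightarrow> 'r"
  an :: "'v \<Rightarrow> 'v"

definition d3 :: "('v \<Rightarrow> ('v \<times> 'v) list) \<Rightarrow> 'v \<Rightarrow> ('v \<times> 'v \<times> 'v) list" where
  "d3 D x = [(a, b1, b2). (a, b) \<leftarrow> D x, (b1, b2) \<leftarrow> D b]"

definition d4 :: "('v \<Rightarrow> ('v \<times> 'v) list) \<Rightarrow> 'v \<Rightarrow> ('v \<times> 'v \<times> 'v \<times> 'v) list" where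
  "d4 D x = [(a, b, c1, c2). (a, b, c) \<leftarrow> d3 D x, (c1, c2) \<leftarrow> D c]"

definition is_alg :: "('r::field, 'v::ab_group_add) hs \<Rightarrow> bool" where
  "is_alg A \<longleftrightarrow> vector_space (sc A) \<and> bilin (sc A) (sc A) (sc A) (mu A)
     \<and> (\<forall>x y z. mu A (mu A x y) z = mu A x (mu A y z))
     \<and> (\<forall>x. mu A (un A) x = x \<and> mu A x (un A) = x)"

definition is_coalg :: "('r::field, 'v::ab_group_add) hs \<Rightarrow> bool" where
  "is_coalg A \<longleftrightarrow> vector_space (sc A)
     \<and> (\<forall>x y. teq2 (sc A) (sc A) (de A (x + y)) (de A x @ de A y))
     \<and> (\<forall>c x. teq2 (sc A) (sc A) (de A (sc A c x)) (map (\<lambda>(a,b). (sc A c a, b)) (de A x)))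
     \<and> lin (sc A) (*) (ep A)
     \<and> (\<forall>x. teq3 (sc A) (sc A) (sc A) [(a1, a2, b). (a, b) \<leftarrow> de A x, (a1, a2) \<leftarrow> de A a] (d3 (de A) x))
     \<and> (\<forall>x. sum_list (map (\<lambda>(a,b). sc A (ep A a) b) (de A x)) = x)
     \<and> (\<forall>x. sum_list (map (\<lambda>(a,b). sc A (ep A b) a) (de A x)) = x)"

definition is_antipode :: "('r::field, 'v::ab_group_add) hs \<Rightarrow> ('v \<Rightarrow> 'v) \<Rightarrow> bool" where
  "is_antipode A S \<longleftrightarrow> lin (sc A) (sc A) S
     \<and> (\<forall>x. sum_list (map (\<lambda>(a,b). mu A a (S b)) (de A x)) = sc A (ep A x) (un A))
     \<and> (\<forall>x. sum_list (map (\<lambda>(a,b). mu A (S a) b) (de A x)) = sc A (ep A x) (un A))"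

definition is_hopf :: "('r::field, 'v::ab_group_add) hs \<Rightarrow> bool" where
  "is_hopf A \<longleftrightarrow> is_alg A \<and> is_coalg A
     \<and> (\<forall>x y. ep A (mu A x y) = ep A x * ep A y) \<and> ep A (un A) = 1
     \<and> teq2 (sc A) (sc A) (de A (un A)) [(un A, un A)]
     \<and> (\<forall>x y. teq2 (sc A) (sc A) (de A (mu A x y))
            [(mu A a c, mu A b d). (a, b) \<leftarrow> de A x, (c, d) \<leftarrow> de A y])
     \<and> is_antipode A (an A)"

definition alg_hom :: "('r::field, 'a::ab_group_add) hs \<Rightarrow> ('r, 'b::ab_group_add) hs \<Rightarrow> ('a \<Rightarrow> 'b) \<Rightarrow> bool" where
  "alg_hom A B f \<longleftrightarrow> lin (sc A) (sc B) f \<and> (\<forall>x y. f (mu A x y) = mu B (f x) (f y)) \<and> f (un A) = un B"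

definition coalg_hom :: "('r::field, 'a::ab_group_add) hs \<Rightarrow> ('r, 'b::ab_group_add) hs \<Rightarrow> ('a \<Rightarrow> 'b) \<Rightarrow> bool" where
  "coalg_hom A B f \<longleftrightarrow> lin (sc A) (sc B) f
     \<and> (\<forall>x. teq2 (sc B) (sc B) (de B (f x)) (map (\<lambda>(a,b). (f a, f b)) (de A x)))
     \<and> (\<forall>x. ep B (f x) = ep A x)"

definition bul :: "('r::field, 'v::ab_group_add) hs \<Rightarrow> ('v \<Rightarrow> 'v \<Rightarrow> 'v) \<Rightarrow> 'v \<Rightarrow> 'v \<Rightarrow> 'v" where
  "bul A act x y = sum_list (map (\<lambda>(a,b). mu A a (act b y)) (de A x))"

definition Sb :: "('r::field, 'v::ab_group_add) hs \<Rightarrow> ('v \<Rightarrow> 'v \<Rightarrow> 'v) \<Rightarrow> 'v \<Rightarrow> 'v" where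
  "Sb A \<beta> x = sum_list (map (\<lambda>(a,b). \<beta> a (an A b)) (de A x))"

definition lhar :: "('r::field, 'v::ab_group_add) hs \<Rightarrow> ('v \<Rightarrow> 'v \<Rightarrow> 'v) \<Rightarrow> ('v \<Rightarrow> 'v \<Rightarrow> 'v) \<Rightarrow> 'v \<Rightarrow> 'v \<Rightarrow> 'v" where
  "lhar A act \<beta> x y = sum_list [bul A act (bul A act (Sb A \<beta> (act x1 y1)) x2) y2.
      (x1, x2) \<leftarrow> de A x, (y1, y2) \<leftarrow> de A y]"

text \<open>(H, mu, un, de, ep, an = S, act) is a Yetter--Drinfeld post-Hopf algebra;
the beta below is beta_act (the convolution inverse of alpha_act in Hom(H, End H)).\<close>
definition is_ydph :: "('r::field, 'v::ab_group_add) hs \<Rightarrow> ('v \<Rightarrow> 'v \<Rightarrow> 'v) \<Rightarrow> bool" where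
  "is_ydph A act \<longleftrightarrow> is_alg A \<and> is_coalg A \<and> is_antipode A (an A)
   \<comment> \<open>act is a coalgebra morphism H (x) H -> H\<close>
   \<and> bilin (sc A) (sc A) (sc A) act
   \<and> (\<forall>x y. teq2 (sc A) (sc A) (de A (act x y))
          [(act x1 y1, act x2 y2). (x1, x2) \<leftarrow> de A x, (y1, y2) \<leftarrow> de A y])
   \<and> (\<forall>x y. ep A (act x y) = ep A x * ep A y)
   \<comment> \<open>(P1)\<close>
   \<and> (\<forall>x y z. act x (mu A y z) = sum_list (map (\<lambda>(x1,x2). mu A (act x1 y) (act x2 z)) (de A x)))
   \<comment> \<open>(P2)\<close>
   \<and> (\<forall>x y z. act x (act y z) = act (bul A act x y) z)
   \<comment> \<open>(P4)\<close>
   \<and> (\<forall>x y. ep A (mu A x y) = ep A x * ep A y) \<and> ep A (un A) = 1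
   \<and> teq2 (sc A) (sc A) (de A (un A)) [(un A, un A)]
   \<comment> \<open>(P3), (P5), (P6)\<close>
   \<and> (\<exists>\<beta>. (\<forall>x. lin (sc A) (sc A) (\<beta> x)) \<and> (\<forall>y. lin (sc A) (sc A) (\<lambda>x. \<beta> x y))
        \<and> (\<forall>x y. sum_list (map (\<lambda>(x1,x2). act x1 (\<beta> x2 y)) (de A x)) = sc A (ep A x) y)
        \<and> (\<forall>x y. sum_list (map (\<lambda>(x1,x2). \<beta> x1 (act x2 y)) (de A x)) = sc A (ep A x) y)
        \<and> (\<forall>x y. teq2 (sc A) (sc A) (de A (mu A x y))
              [(mu A x1 (act x2 (\<beta> x4 y1)), mu A x3 y2). (x1, x2, x3, x4) \<leftarrow> d4 (de A) x, (y1, y2) \<leftarrow> de A y])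
        \<and> (\<forall>x. teq2 (sc A) (sc A) (de A (Sb A \<beta> x)) [(Sb A \<beta> x2, Sb A \<beta> x1). (x1, x2) \<leftarrow> de A x])
        \<and> (\<forall>x y. teq2 (sc A) (sc A)
              [(act x1 y1, lhar A act \<beta> x2 y2). (x1, x2) \<leftarrow> de A x, (y1, y2) \<leftarrow> de A y]
              [(act x2 y2, lhar A act \<beta> x1 y1). (x1, x2) \<leftarrow> de A x, (y1, y2) \<leftarrow> de A y]))"

definition ydph_hom :: "('r::field, 'a::ab_group_add) hs \<Rightarrow> ('a \<Rightarrow> 'a \<Rightarrow> 'a)
    \<Rightarrow> ('r, 'b::ab_group_add) hs \<Rightarrow> ('b \<Rightarrow> 'b \<Rightarrow> 'b) \<Rightarrow> ('a \<Rightarrow> 'b) \<Rightarrow> bool" where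
  "ydph_hom A act B act' g \<longleftrightarrow> alg_hom A B g \<and> coalg_hom A B g
     \<and> (\<forall>x y. g (act x y) = act' (g x) (g y))"

text \<open>Subadjacent structure H_act (only its algebra/coalgebra part is relevant
for morphisms; the antipode field is kept as S_act for a chosen beta_act).\<close>
definition subadj :: "('r::field, 'v::ab_group_add) hs \<Rightarrow> ('v \<Rightarrow> 'v \<Rightarrow> 'v) \<Rightarrow> ('r, 'v) hs" where
  "subadj A act = A\<lparr>mu := bul A act,
     an := Sb A (SOME \<beta>. \<forall>x y. sum_list (map (\<lambda>(x1,x2). act x1 (\<beta> x2 y)) (de A x)) = sc A (ep A x) y
                        \<and> sum_list (map (\<lambda>(x1,x2). \<beta> x1 (act x2 y)) (de A x)) = sc A (ep A x) y)\<rparr>"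

definition rho :: "('r::field, 'h::ab_group_add) hs \<Rightarrow> ('r, 'k::ab_group_add) hs \<Rightarrow> ('k \<Rightarrow> 'h) \<Rightarrow> 'k \<Rightarrow> ('h \<times> 'k) list" where
  "rho H K R a = [(mu H (R a1) (an H (R a3)), a2). (a1, a2, a3) \<leftarrow> d3 (de K) a]"

definition is_yd_mod :: "('r::field, 'h::ab_group_add) hs \<Rightarrow> ('r, 'k::ab_group_add) hs
    \<Rightarrow> ('h \<Rightarrow> 'k \<Rightarrow> 'k) \<Rightarrow> ('k \<Rightarrow> ('h \<times> 'k) list) \<Rightarrow> bool" where
  "is_yd_mod H K act co \<longleftrightarrow> vector_space (sc K)
     \<and> bilin (sc H) (sc K) (sc K) act
     \<and> (\<forall>h h' v. act (mu H h h') v = act h (act h' v)) \<and> (\<forall>v. act (un H) v = v)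
     \<and> (\<forall>x y. teq2 (sc H) (sc K) (co (x + y)) (co x @ co y))
     \<and> (\<forall>c x. teq2 (sc H) (sc K) (co (sc K c x)) (map (\<lambda>(a,b). (a, sc K c b)) (co x)))
     \<and> (\<forall>v. teq3 (sc H) (sc H) (sc K) [(h1, h2, w). (h, w) \<leftarrow> co v, (h1, h2) \<leftarrow> de H h]
                                         [(h, h', w). (h, u) \<leftarrow> co v, (h', w) \<leftarrow> co u])
     \<and> (\<forall>v. sum_list (map (\<lambda>(h,w). sc K (ep H h) w) (co v)) = v)
     \<and> (\<forall>h v. teq2 (sc H) (sc K) (co (act h v))
            [(mu H (mu H h1 vm) (an H h3), act h2 v0). (h1, h2, h3) \<leftarrow> d3 (de H) h, (vm, v0) \<leftarrow> co v])"

definition is_yd_bimonoid :: "('r::field, 'h::ab_group_add) hs \<Rightarrow> ('r, 'k::ab_group_add) hs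
    \<Rightarrow> ('h \<Rightarrow> 'k \<Rightarrow> 'k) \<Rightarrow> ('k \<Rightarrow> ('h \<times> 'k) list) \<Rightarrow> bool" where
  "is_yd_bimonoid H K act co \<longleftrightarrow> is_yd_mod H K act co \<and> is_alg K \<and> is_coalg K
     \<comment> \<open>multiplication and unit are YD morphisms\<close>
     \<and> (\<forall>h a b. act h (mu K a b) = sum_list (map (\<lambda>(h1,h2). mu K (act h1 a) (act h2 b)) (de H h)))
     \<and> (\<forall>a b. teq2 (sc H) (sc K) (co (mu K a b)) [(mu H am bm, mu K a0 b0). (am, a0) \<leftarrow> co a, (bm, b0) \<leftarrow> co b])
     \<and> (\<forall>h. act h (un K) = sc K (ep H h) (un K))
     \<and> teq2 (sc H) (sc K) (co (un K)) [(un H, un K)]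
     \<comment> \<open>comultiplication and counit are YD morphisms\<close>
     \<and> (\<forall>h a. teq2 (sc K) (sc K) (de K (act h a)) [(act h1 a1, act h2 a2). (h1, h2) \<leftarrow> de H h, (a1, a2) \<leftarrow> de K a])
     \<and> (\<forall>a. teq3 (sc H) (sc K) (sc K) [(hm, b1, b2). (hm, b) \<leftarrow> co a, (b1, b2) \<leftarrow> de K b]
              [(mu H xm ym, x0, y0). (a1, a2) \<leftarrow> de K a, (xm, x0) \<leftarrow> co a1, (ym, y0) \<leftarrow> co a2])
     \<and> (\<forall>h a. ep K (act h a) = ep H h * ep K a)
     \<and> (\<forall>a. sum_list (map (\<lambda>(hm, a0). sc H (ep K a0) hm) (co a)) = sc H (ep K a) (un H))
     \<comment> \<open>bimonoid compatibilities, with the braiding sigma(v (x) w) = v_(-1) . w (x) v_0\<close>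
     \<and> (\<forall>a b. ep K (mu K a b) = ep K a * ep K b) \<and> ep K (un K) = 1
     \<and> teq2 (sc K) (sc K) (de K (un K)) [(un K, un K)]
     \<and> (\<forall>a b. teq2 (sc K) (sc K) (de K (mu K a b))
            [(mu K a1 (act am b1), mu K a0 b2). (a1, a2) \<leftarrow> de K a, (am, a0) \<leftarrow> co a2, (b1, b2) \<leftarrow> de K b])"

definition is_ydrb :: "('r::field, 'h::ab_group_add) hs \<Rightarrow> ('r, 'k::ab_group_add) hs
    \<Rightarrow> ('h \<Rightarrow> 'k \<Rightarrow> 'k) \<Rightarrow> ('k \<Rightarrow> 'h) \<Rightarrow> bool" where
  "is_ydrb H K act R \<longleftrightarrow> coalg_hom K H R
     \<and> (\<forall>a b. mu H (R a) (R b) = R (sum_list (map (\<lambda>(a1,a2). mu K a1 (act (R a2) b)) (de K a))))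
     \<and> (\<forall>a b. teq2 (sc H) (sc H)
         [(mu H (mu H (an H (R (act (R a1) b1))) (R a2)) (R b2), R (act (R a3) b3)).
            (a1, a2, a3) \<leftarrow> d3 (de K) a, (b1, b2, b3) \<leftarrow> d3 (de K) b]
         [(mu H (mu H (an H (R (act (R a2) b2))) (R a3)) (R b3), R (act (R a1) b1)).
            (a1, a2, a3) \<leftarrow> d3 (de K) a, (b1, b2, b3) \<leftarrow> d3 (de K) b])"

definition obj_C' :: "('r::field, 'h::ab_group_add) hs \<Rightarrow> ('r, 'k::ab_group_add) hs
    \<Rightarrow> ('h \<Rightarrow> 'k \<Rightarrow> 'k) \<Rightarrow> ('k \<Rightarrow> 'h) \<Rightarrow> bool" where
  "obj_C' H K act R \<longleftrightarrow> is_hopf H \<and> is_yd_bimonoid H K act (rho H K R)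
     \<and> is_antipode K (an K) \<and> is_ydrb H K act R \<and> inj R"

definition mor_rb :: "('r::field, 'h1::ab_group_add) hs \<Rightarrow> ('r, 'k1::ab_group_add) hs \<Rightarrow> ('h1 \<Rightarrow> 'k1 \<Rightarrow> 'k1) \<Rightarrow> ('k1 \<Rightarrow> 'h1)
    \<Rightarrow> ('r, 'h2::ab_group_add) hs \<Rightarrow> ('r, 'k2::ab_group_add) hs \<Rightarrow> ('h2 \<Rightarrow> 'k2 \<Rightarrow> 'k2) \<Rightarrow> ('k2 \<Rightarrow> 'h2)
    \<Rightarrow> ('h1 \<Rightarrow> 'h2) \<Rightarrow> ('k1 \<Rightarrow> 'k2) \<Rightarrow> bool" where
  "mor_rb H1 K1 act1 R1 H2 K2 act2 R2 f g \<longleftrightarrow>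
     alg_hom H1 H2 f \<and> coalg_hom H1 H2 f \<and> alg_hom K1 K2 g \<and> coalg_hom K1 K2 g
     \<and> f \<circ> R1 = R2 \<circ> g \<and> (\<forall>h k. g (act1 h k) = act2 (f h) (g k))"

end

theory Submission
  imports Defs
begin

text \<open>Everything is transported along \<open>R\<close>. With \<open>a \<rightharpoonup>\<^sub>R b = R(a) \<rightharpoonup> b\<close>, (RB1) says that
  \<open>R\<close> is multiplicative from the subadjacent product \<open>a\<^sub>1 (R(a\<^sub>2) \<rightharpoonup> b)\<close> of \<open>K\<close> to \<open>H\<close>;
  hence \<open>R(1) = 1\<close>, and \<open>R\<close> sends \<open>S\<^sub>R(a) = S\<^sub>H(R a\<^sub>1) \<rightharpoonup> S\<^sub>K(a\<^sub>2)\<close> to \<open>S\<^sub>H(R a)\<close>.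
  The Yetter--Drinfeld bimonoid axioms of \<open>K\<close> give (P1)--(P5) directly, with
  \<open>\<beta>\<^sub>R(a) = S\<^sub>H(R a) \<rightharpoonup> -\<close>. The two coalgebra identities of (P6) are checked after applying
  the injective coalgebra map \<open>R\<close>, where they become the anti-coalgebra property of \<open>S\<^sub>H\<close>
  and (RB2). For the adjunction, a morphism \<open>(f, g)\<close> out of \<open>Id\<^sub>G\<close> is forced to have
  \<open>f = R \<circ> g\<close>, and conversely \<open>R \<circ> g\<close> is an algebra map on \<open>G\<^sub>\<rightharpoonup>\<close> because \<open>g\<close> intertwines the
  subadjacent products.\<close>

lemma sum_list_concat: "sum_list (concat xss) = sum_list (map sum_list (xss :: 'a::monoid_add list list))"
  by (induction xss) auto

lemma sum_list_commute: "(\<Sum>x\<leftarrow>xs. \<Sum>y\<leftarrow>ys. f x y) = (\<Sum>y\<leftarrow>ys. \<Sum>x\<leftarrow>xs. f x y :: 'a::ab_group_add)"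
  by (induction xs) (auto simp: sum_list_addf)

lemma vector_space_mult: "vector_space ((*) :: 'r::field \<Rightarrow> 'r \<Rightarrow> 'r)"
  by unfold_locales (auto simp: algebra_simps)

lemma lin_imp_linear:
  assumes "vector_space s1" "vector_space s2" "lin s1 s2 f"
  shows "Vector_Spaces.linear s1 s2 f"
  using assms unfolding Vector_Spaces.linear_def module_hom_def module_hom_axioms_def lin_def
  by (simp add: module_iff_vector_space)

lemma linear_imp_lin: "Vector_Spaces.linear s1 s2 f \<Longrightarrow> lin s1 s2 f"
  unfolding lin_def by (simp add: linear_iff_module_hom module_hom.add module_hom.scale)

lemma lin_add: "lin s1 s2 f \<Longrightarrow> f (x + y) = f x + f y"
  unfolding lin_def by blast

lemma lin_scale: "lin s1 s2 f \<Longrightarrow> f (s1 c x) = s2 c (f x)"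
  unfolding lin_def by blast

lemma lin_zero: "lin s1 s2 f \<Longrightarrow> f 0 = 0"
  by (metis add_cancel_right_right lin_add)

lemma lin_diff: "lin s1 s2 f \<Longrightarrow> f (x - y) = f x - f y"
  by (metis add_diff_cancel lin_add eq_diff_eq)

lemma lin_sum_list: "lin s1 s2 f \<Longrightarrow> f (sum_list (map g xs)) = sum_list (map (\<lambda>x. f (g x)) xs)"
  by (induction xs) (auto simp: lin_zero lin_add)

lemma lin_id: "lin s s (\<lambda>x. x)"
  by (simp add: lin_def)

lemma lin_comp: "lin s1 s2 G \<Longrightarrow> lin s0 s1 f \<Longrightarrow> lin s0 s2 (\<lambda>x. G (f x))"
  unfolding lin_def by simp

lemma bilinD:
  assumes "bilin s1 s2 s3 \<phi>"
  shows "lin s1 s3 (\<lambda>a. \<phi> a b)" "lin s2 s3 (\<lambda>b. \<phi> a b)"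
  using assms unfolding bilin_def by auto

lemma scale_sum_list:
  assumes "vector_space s" shows "s c (sum_list (map f xs)) = sum_list (map (\<lambda>x. s c (f x)) xs)"
proof -
  interpret vector_space s by fact
  show ?thesis by (induction xs) (auto simp: scale_right_distrib)
qed

lemma lin_scale_left:
  assumes "vector_space sW" "lin s0 sW g" shows "lin s0 sW (\<lambda>x. sW c (g x))"
proof -
  interpret vector_space sW by fact
  show ?thesis using assms(2) unfolding lin_def by (simp add: scale_right_distrib scale_left_commute)
qed

lemma lin_sum_list_fun:
  assumes "vector_space s2" "\<And>y. lin s1 s2 (\<lambda>x. F x y)"
  shows "lin s1 s2 (\<lambda>x. sum_list (map (\<lambda>y. F x y) ys))"
proof -
  interpret vector_space s2 by fact
  show ?thesis unfolding lin_def
  proof safe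
    fix x y show "(\<Sum>z\<leftarrow>ys. F (x + y) z) = (\<Sum>z\<leftarrow>ys. F x z) + (\<Sum>z\<leftarrow>ys. F y z)"
      by (induction ys) (auto simp: lin_add[OF assms(2)])
  next
    fix c x show "(\<Sum>z\<leftarrow>ys. F (s1 c x) z) = s2 c (\<Sum>z\<leftarrow>ys. F x z)"
      by (induction ys) (auto simp: lin_scale[OF assms(2)] scale_right_distrib)
  qed
qed

lemma lin_sum_list_pair:
  assumes "vector_space s2" "\<And>a b. lin s1 s2 (\<lambda>x. F x a b)"
  shows "lin s1 s2 (\<lambda>x. sum_list (map (\<lambda>p. F x (fst p) (snd p)) ys))"
  by (rule lin_sum_list_fun) (use assms in auto)

lemma eq_if_functionals_eq:
  fixes s :: "'r::field \<Rightarrow> 'v::ab_group_add \<Rightarrow> 'v"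
  assumes vs: "vector_space s" and eq: "\<And>\<psi>. lin s (*) \<psi> \<Longrightarrow> \<psi> u = \<psi> v"
  shows "u = v"
proof (rule ccontr)
  assume "u \<noteq> v"
  interpret vector_space_pair s "(*) :: 'r \<Rightarrow> 'r \<Rightarrow> 'r"
    by (simp add: vector_space_pair_def vs vector_space_mult)
  have "vs1.independent {u - v}" using \<open>u \<noteq> v\<close> by simp
  from linear_independent_extend[OF this, of "\<lambda>_. 1"]
  obtain g where g: "Vector_Spaces.linear s (*) g" "g (u - v) = 1" by auto
  from g(1) have "lin s (*) g" by (rule linear_imp_lin)
  with eq have "g (u - v) = 0" by (simp add: lin_diff)
  with g show False by simp
qed

lemma lin_inj_left_inverse:
  fixes s1 :: "'r::field \<Rightarrow> 'a::ab_group_add \<Rightarrow> 'a" and s2 :: "'r \<Rightarrow> 'b::ab_group_add \<Rightarrow> 'b"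
  assumes "vector_space s1" "vector_space s2" "lin s1 s2 f" "inj f"
  obtains g where "lin s2 s1 g" "\<And>x. g (f x) = x"
proof -
  interpret vector_space_pair s1 s2 by (simp add: vector_space_pair_def assms)
  from linear_injective_left_inverse[OF lin_imp_linear[OF assms(1-3)] assms(4)]
  obtain g where "Vector_Spaces.linear s2 s1 g" "g \<circ> f = id" by blast
  thus ?thesis using that linear_imp_lin by (metis comp_apply id_apply)
qed

text \<open>Tensor equalities, which are defined by testing against scalar-valued multilinear maps,
  may be tested against vector-valued ones: compose with every functional and separate.\<close>

lemma teq2_sum_eq:
  fixes sW :: "'r::field \<Rightarrow> 'w::ab_group_add \<Rightarrow> 'w"
  assumes vs: "vector_space sW" and t: "teq2 s1 s2 xs ys"
    and F: "\<And>b. lin s1 sW (\<lambda>a. F a b)" "\<And>a. lin s2 sW (\<lambda>b. F a b)"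
  shows "(\<Sum>p\<leftarrow>xs. F (fst p) (snd p)) = (\<Sum>p\<leftarrow>ys. F (fst p) (snd p))"
proof (rule eq_if_functionals_eq[OF vs])
  fix \<psi> assume l: "lin sW (*) \<psi>"
  have "bilin s1 s2 (*) (\<lambda>a b. \<psi> (F a b))"
    using F l unfolding bilin_def lin_def by auto
  with t have "(\<Sum>p\<leftarrow>xs. \<psi> (F (fst p) (snd p))) = (\<Sum>p\<leftarrow>ys. \<psi> (F (fst p) (snd p)))"
    unfolding teq2_def split_def by blast
  thus "\<psi> (\<Sum>p\<leftarrow>xs. F (fst p) (snd p)) = \<psi> (\<Sum>p\<leftarrow>ys. F (fst p) (snd p))"
    by (simp add: lin_sum_list[OF l])
qed

lemma teq3_sum_eq:
  fixes sW :: "'r::field \<Rightarrow> 'w::ab_group_add \<Rightarrow> 'w"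
  assumes vs: "vector_space sW" and t: "teq3 s1 s2 s3 xs ys"
    and F: "\<And>y z. lin s1 sW (\<lambda>x. F x y z)" "\<And>x z. lin s2 sW (\<lambda>y. F x y z)" "\<And>x y. lin s3 sW (\<lambda>z. F x y z)"
  shows "sum_list (map (\<lambda>(a,b,c). F a b c) xs) = sum_list (map (\<lambda>(a,b,c). F a b c) ys)"
proof (rule eq_if_functionals_eq[OF vs])
  fix \<psi> assume l: "lin sW (*) \<psi>"
  have "trilin s1 s2 s3 (\<lambda>a b c. \<psi> (F a b c))"
    using F l unfolding trilin_def lin_def by auto
  with t have "sum_list (map (\<lambda>(a,b,c). \<psi> (F a b c)) xs) = sum_list (map (\<lambda>(a,b,c). \<psi> (F a b c)) ys)"
    unfolding teq3_def by blast
  thus "\<psi> (sum_list (map (\<lambda>(a,b,c). F a b c) xs)) = \<psi> (sum_list (map (\<lambda>(a,b,c). F a b c) ys))"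
    by (simp add: lin_sum_list[OF l] split_def)
qed

locale coalg =
  fixes A :: "('r::field, 'v::ab_group_add) hs"
  assumes coalg: "is_coalg A"
begin

lemma vs: "vector_space (sc A)"
  using coalg unfolding is_coalg_def by blast

lemma scale_one [simp]: "sc A 1 x = x"
  by (rule vector_space.vector_space_assms(4)[OF vs])

lemma ep_lin: "lin (sc A) (*) (ep A)"
  using coalg unfolding is_coalg_def by blast

lemma lin_sum_de:
  assumes W: "vector_space sW" and F: "\<And>b. lin (sc A) sW (\<lambda>a. F a b)" "\<And>a. lin (sc A) sW (\<lambda>b. F a b)"
  shows "lin (sc A) sW (\<lambda>x. \<Sum>p\<leftarrow>de A x. F (fst p) (snd p))"
  unfolding lin_def
proof safe
  fix x y
  have "teq2 (sc A) (sc A) (de A (x + y)) (de A x @ de A y)"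
    using coalg unfolding is_coalg_def by blast
  from teq2_sum_eq[OF W this F]
  show "(\<Sum>p\<leftarrow>de A (x + y). F (fst p) (snd p)) = (\<Sum>p\<leftarrow>de A x. F (fst p) (snd p)) + (\<Sum>p\<leftarrow>de A y. F (fst p) (snd p))"
    by simp
next
  fix c x
  have "teq2 (sc A) (sc A) (de A (sc A c x)) (map (\<lambda>(a,b). (sc A c a, b)) (de A x))"
    using coalg unfolding is_coalg_def by blast
  from teq2_sum_eq[OF W this F]
  have "(\<Sum>p\<leftarrow>de A (sc A c x). F (fst p) (snd p)) = (\<Sum>p\<leftarrow>de A x. sW c (F (fst p) (snd p)))"
    by (simp add: split_def comp_def lin_scale[OF F(1)])
  thus "(\<Sum>p\<leftarrow>de A (sc A c x). F (fst p) (snd p)) = sW c (\<Sum>p\<leftarrow>de A x. F (fst p) (snd p))"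
    by (simp add: scale_sum_list[OF W])
qed

lemma lin_sum_de_comp:
  assumes W: "vector_space sW" and f: "lin s0 (sc A) f"
    and F: "\<And>b. lin (sc A) sW (\<lambda>a. F a b)" "\<And>a. lin (sc A) sW (\<lambda>b. F a b)"
  shows "lin s0 sW (\<lambda>x. \<Sum>p\<leftarrow>de A (f x). F (fst p) (snd p))"
  using lin_comp[OF lin_sum_de[OF W F] f] .

lemma lin_ep_scale:
  assumes "vector_space sW" "lin s0 (sc A) f" shows "lin s0 sW (\<lambda>x. sW (ep A (f x)) c)"
proof -
  interpret vector_space sW by fact
  show ?thesis using assms(2) ep_lin unfolding lin_def by (simp add: scale_left_distrib)
qed

lemma coassoc:
  assumes W: "vector_space sW"
    and F: "\<And>y z. lin (sc A) sW (\<lambda>x. F x y z)" "\<And>x z. lin (sc A) sW (\<lambda>y. F x y z)"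
      "\<And>x y. lin (sc A) sW (\<lambda>z. F x y z)"
  shows "(\<Sum>p\<leftarrow>de A x. \<Sum>q\<leftarrow>de A (fst p). F (fst q) (snd q) (snd p))
       = (\<Sum>p\<leftarrow>de A x. \<Sum>q\<leftarrow>de A (snd p). F (fst p) (fst q) (snd q))"
proof -
  have "teq3 (sc A) (sc A) (sc A) [(a1, a2, b). (a, b) \<leftarrow> de A x, (a1, a2) \<leftarrow> de A a] (d3 (de A) x)"
    using coalg unfolding is_coalg_def by blast
  from teq3_sum_eq[OF W this F] show ?thesis
    by (simp add: d3_def sum_list_concat map_concat comp_def split_def)
qed

lemma counit_left:
  assumes "lin (sc A) sW G"
  shows "(\<Sum>p\<leftarrow>de A x. sW (ep A (fst p)) (G (snd p))) = G x"
proof -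
  have "G x = G (\<Sum>p\<leftarrow>de A x. sc A (ep A (fst p)) (snd p))"
    using coalg unfolding is_coalg_def by (simp add: split_def)
  thus ?thesis by (simp add: lin_sum_list[OF assms] lin_scale[OF assms])
qed

lemma counit_right:
  assumes "lin (sc A) sW G"
  shows "(\<Sum>p\<leftarrow>de A x. sW (ep A (snd p)) (G (fst p))) = G x"
proof -
  have "G x = G (\<Sum>p\<leftarrow>de A x. sc A (ep A (snd p)) (fst p))"
    using coalg unfolding is_coalg_def by (simp add: split_def)
  thus ?thesis by (simp add: lin_sum_list[OF assms] lin_scale[OF assms])
qed

end

locale hopf = coalg A for A :: "('r::field, 'v::ab_group_add) hs" +
  assumes hopf: "is_hopf A"
begin

lemma alg: "is_alg A"
  using hopf unfolding is_hopf_def by blast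

lemma mu_assoc: "mu A (mu A x y) z = mu A x (mu A y z)"
  using alg unfolding is_alg_def by blast

lemma mu_un_left [simp]: "mu A (un A) x = x"
  using alg unfolding is_alg_def by blast

lemma mu_un_right [simp]: "mu A x (un A) = x"
  using alg unfolding is_alg_def by blast

lemma mu_lin1: "lin (sc A) (sc A) (\<lambda>x. mu A x y)"
  using alg unfolding is_alg_def bilin_def by blast

lemma mu_lin2: "lin (sc A) (sc A) (\<lambda>y. mu A x y)"
  using alg unfolding is_alg_def bilin_def by blast

lemma an_lin: "lin (sc A) (sc A) (an A)"
  using hopf unfolding is_hopf_def is_antipode_def by blast

lemma antipode_right: "(\<Sum>p\<leftarrow>de A x. mu A (fst p) (an A (snd p))) = sc A (ep A x) (un A)"
  using hopf unfolding is_hopf_def is_antipode_def by (simp add: split_def)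

lemma antipode_left: "(\<Sum>p\<leftarrow>de A x. mu A (an A (fst p)) (snd p)) = sc A (ep A x) (un A)"
  using hopf unfolding is_hopf_def is_antipode_def by (simp add: split_def)

lemma mu_scale_left: "mu A (sc A c x) y = sc A c (mu A x y)"
  using lin_scale[OF mu_lin1] .

lemma mu_scale_right: "mu A x (sc A c y) = sc A c (mu A x y)"
  using lin_scale[OF mu_lin2] .

lemma lin_mu_left: "lin s0 (sc A) f \<Longrightarrow> lin s0 (sc A) (\<lambda>x. mu A (f x) y)"
  using lin_comp[OF mu_lin1] .

lemma lin_mu_right: "lin s0 (sc A) f \<Longrightarrow> lin s0 (sc A) (\<lambda>x. mu A y (f x))"
  using lin_comp[OF mu_lin2] .

lemma lin_an: "lin s0 (sc A) f \<Longrightarrow> lin s0 (sc A) (\<lambda>x. an A (f x))"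
  using lin_comp[OF an_lin] .

lemmas linI = lin_id lin_mu_left lin_mu_right lin_an lin_ep_scale lin_scale_left lin_sum_list_pair
  lin_sum_de_comp

lemma de_mu:
  assumes W: "vector_space sW" and F: "\<And>b. lin (sc A) sW (\<lambda>a. F a b)" "\<And>a. lin (sc A) sW (\<lambda>b. F a b)"
  shows "(\<Sum>p\<leftarrow>de A (mu A x y). F (fst p) (snd p))
     = (\<Sum>p\<leftarrow>de A x. \<Sum>q\<leftarrow>de A y. F (mu A (fst p) (fst q)) (mu A (snd p) (snd q)))"
proof -
  have "teq2 (sc A) (sc A) (de A (mu A x y)) [(mu A a c, mu A b d). (a, b) \<leftarrow> de A x, (c, d) \<leftarrow> de A y]"
    using hopf unfolding is_hopf_def by blast
  from teq2_sum_eq[OF W this F] show ?thesis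
    by (simp add: sum_list_concat map_concat comp_def split_def)
qed

lemma de_un:
  assumes W: "vector_space sW" and F: "\<And>b. lin (sc A) sW (\<lambda>a. F a b)" "\<And>a. lin (sc A) sW (\<lambda>b. F a b)"
  shows "(\<Sum>p\<leftarrow>de A (un A). F (fst p) (snd p)) = F (un A) (un A)"
proof -
  have "teq2 (sc A) (sc A) (de A (un A)) [(un A, un A)]"
    using hopf unfolding is_hopf_def by blast
  from teq2_sum_eq[OF W this F] show ?thesis by simp
qed

text \<open>The antipode is an anti-coalgebra map, by the classical argument: the sum
  \<open>\<Delta>(S x\<^sub>1 x\<^sub>2 S x\<^sub>3)\<close>, expanded multiplicatively, collapses both to \<open>\<Delta>(S x)\<close> (contracting
  \<open>x\<^sub>2 S x\<^sub>3\<close>) and to the flipped \<open>S x\<^sub>2 \<otimes> S x\<^sub>1\<close> (contracting \<open>S x\<^sub>1 x\<^sub>2\<close>).\<close>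

lemma antipode_contract_right:
  assumes W: "vector_space sW" and F: "\<And>b. lin (sc A) sW (\<lambda>a. F a b)" "\<And>a. lin (sc A) sW (\<lambda>b. F a b)"
  shows "(\<Sum>q\<leftarrow>de A y. \<Sum>v\<leftarrow>de A (fst q). \<Sum>w\<leftarrow>de A (snd q).
            F (mu A (mu A u1 (fst v)) (an A (snd w))) (mu A (mu A u2 (snd v)) (an A (fst w))))
       = sW (ep A y) (F u1 u2)"
proof -
  note F1 = lin_comp[OF F(1)] and F2 = lin_comp[OF F(2)]
  let ?P = "\<lambda>a b c d. F (mu A (mu A u1 a) (an A d)) (mu A (mu A u2 b) (an A c))"
  have contract: "(\<Sum>t\<leftarrow>de A z. ?P a (fst t) (snd t) d) = sW (ep A z) (F (mu A (mu A u1 a) (an A d)) u2)"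
    for a z d
  proof -
    have "(\<Sum>t\<leftarrow>de A z. ?P a (fst t) (snd t) d)
        = F (mu A (mu A u1 a) (an A d)) (mu A u2 (\<Sum>t\<leftarrow>de A z. mu A (fst t) (an A (snd t))))"
      by (simp add: lin_sum_list[OF F(2)] lin_sum_list[OF mu_lin2] mu_assoc)
    thus ?thesis by (simp add: antipode_right mu_scale_right lin_scale[OF F(2)])
  qed
  have "(\<Sum>q\<leftarrow>de A y. \<Sum>v\<leftarrow>de A (fst q). \<Sum>w\<leftarrow>de A (snd q). ?P (fst v) (snd v) (fst w) (snd w))
      = (\<Sum>q\<leftarrow>de A y. \<Sum>r\<leftarrow>de A (snd q). \<Sum>w\<leftarrow>de A (snd r). ?P (fst q) (fst r) (fst w) (snd w))"
    by (rule coassoc[OF W, where F="\<lambda>a b c. \<Sum>w\<leftarrow>de A c. ?P a b (fst w) (snd w)"])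
       (intro linI W vs F1 F2)+
  also have "\<dots> = (\<Sum>q\<leftarrow>de A y. \<Sum>r\<leftarrow>de A (snd q). \<Sum>t\<leftarrow>de A (fst r). ?P (fst q) (fst t) (snd t) (snd r))"
    by (intro arg_cong[where f=sum_list] map_cong refl coassoc[OF W, symmetric])
       (intro linI W vs F1 F2)+
  also have "\<dots> = (\<Sum>q\<leftarrow>de A y. \<Sum>r\<leftarrow>de A (snd q). sW (ep A (fst r)) (F (mu A (mu A u1 (fst q)) (an A (snd r))) u2))"
    by (simp add: contract)
  also have "\<dots> = (\<Sum>q\<leftarrow>de A y. F (mu A (mu A u1 (fst q)) (an A (snd q))) u2)"
    by (subst counit_left) (intro linI W vs F1 F2, rule refl)
  also have "\<dots> = F (mu A u1 (\<Sum>q\<leftarrow>de A y. mu A (fst q) (an A (snd q)))) u2"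
    by (simp add: lin_sum_list[OF F(1)] lin_sum_list[OF mu_lin2] mu_assoc)
  also have "\<dots> = sW (ep A y) (F u1 u2)"
    by (simp add: antipode_right mu_scale_right lin_scale[OF F(1)])
  finally show ?thesis .
qed

lemma antipode_contract_left:
  assumes W: "vector_space sW" and F: "\<And>b. lin (sc A) sW (\<lambda>a. F a b)" "\<And>a. lin (sc A) sW (\<lambda>b. F a b)"
  shows "(\<Sum>q\<leftarrow>de A y. \<Sum>u\<leftarrow>de A (an A (fst q)). \<Sum>v\<leftarrow>de A (snd q).
            F (mu A (mu A (fst u) (fst v)) (an A w2)) (mu A (mu A (snd u) (snd v)) (an A w1)))
       = sW (ep A y) (F (an A w2) (an A w1))"
proof -
  define \<Psi> where "\<Psi> = (\<lambda>a b. F (mu A a (an A w2)) (mu A b (an A w1)))"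
  have P1: "lin (sc A) sW (\<lambda>a. \<Psi> a b)" for b
    unfolding \<Psi>_def by (intro linI W vs lin_comp[OF F(1)] lin_comp[OF F(2)])+
  have P2: "lin (sc A) sW (\<lambda>b. \<Psi> a b)" for a
    unfolding \<Psi>_def by (intro linI W vs lin_comp[OF F(1)] lin_comp[OF F(2)])+
  have PL: "lin (sc A) sW (\<lambda>z. \<Sum>r\<leftarrow>de A z. \<Psi> (fst r) (snd r))"
    by (rule lin_sum_de[OF W P1 P2])
  have "(\<Sum>q\<leftarrow>de A y. \<Sum>u\<leftarrow>de A (an A (fst q)). \<Sum>v\<leftarrow>de A (snd q).
            F (mu A (mu A (fst u) (fst v)) (an A w2)) (mu A (mu A (snd u) (snd v)) (an A w1)))
      = (\<Sum>q\<leftarrow>de A y. \<Sum>r\<leftarrow>de A (mu A (an A (fst q)) (snd q)). \<Psi> (fst r) (snd r))"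
    unfolding \<Psi>_def by (simp add: de_mu[OF W P1 P2, unfolded \<Psi>_def])
  also have "\<dots> = (\<Sum>r\<leftarrow>de A (\<Sum>q\<leftarrow>de A y. mu A (an A (fst q)) (snd q)). \<Psi> (fst r) (snd r))"
    by (simp add: lin_sum_list[OF PL])
  also have "\<dots> = sW (ep A y) (\<Psi> (un A) (un A))"
    by (simp add: antipode_left lin_scale[OF PL] de_un[OF W P1 P2])
  finally show ?thesis unfolding \<Psi>_def by simp
qed

lemma de_an:
  assumes W: "vector_space sW" and F: "\<And>b. lin (sc A) sW (\<lambda>a. F a b)" "\<And>a. lin (sc A) sW (\<lambda>b. F a b)"
  shows "(\<Sum>p\<leftarrow>de A (an A x). F (fst p) (snd p)) = (\<Sum>p\<leftarrow>de A x. F (an A (snd p)) (an A (fst p)))"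
proof -
  note F1 = lin_comp[OF F(1)] and F2 = lin_comp[OF F(2)]
  define X where "X = (\<lambda>u1 u2 v1 v2 w1 w2. F (mu A (mu A u1 v1) (an A w2)) (mu A (mu A u2 v2) (an A w1)))"
  define Z where "Z = (\<lambda>a b c. \<Sum>u\<leftarrow>de A (an A a). \<Sum>v\<leftarrow>de A b. \<Sum>w\<leftarrow>de A c.
      X (fst u) (snd u) (fst v) (snd v) (fst w) (snd w))"
  have Z1: "lin (sc A) sW (\<lambda>a. Z a b c)" for b c unfolding Z_def X_def by (intro linI W vs F1 F2)+
  have Z2: "lin (sc A) sW (\<lambda>b. Z a b c)" for a c unfolding Z_def X_def by (intro linI W vs F1 F2)+
  have Z3: "lin (sc A) sW (\<lambda>c. Z a b c)" for a b unfolding Z_def X_def by (intro linI W vs F1 F2)+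
  have contract_right: "(\<Sum>q\<leftarrow>de A y. Z a (fst q) (snd q)) = sW (ep A y) (\<Sum>u\<leftarrow>de A (an A a). F (fst u) (snd u))"
    for a y
    unfolding Z_def X_def
    by (subst sum_list_commute) (simp add: antipode_contract_right[OF W F] scale_sum_list[OF W])
  have contract_left: "(\<Sum>q\<leftarrow>de A y. Z (fst q) (snd q) c) = sW (ep A y) (\<Sum>w\<leftarrow>de A c. F (an A (snd w)) (an A (fst w)))"
    for y c
  proof -
    have "Z a b c = (\<Sum>w\<leftarrow>de A c. \<Sum>u\<leftarrow>de A (an A a). \<Sum>v\<leftarrow>de A b.
        X (fst u) (snd u) (fst v) (snd v) (fst w) (snd w))" for a b
      unfolding Z_def by (subst sum_list_commute) (simp add: sum_list_commute[where ys="de A c"])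
    hence "(\<Sum>q\<leftarrow>de A y. Z (fst q) (snd q) c) = (\<Sum>w\<leftarrow>de A c. \<Sum>q\<leftarrow>de A y. \<Sum>u\<leftarrow>de A (an A (fst q)).
        \<Sum>v\<leftarrow>de A (snd q). X (fst u) (snd u) (fst v) (snd v) (fst w) (snd w))"
      by (simp add: sum_list_commute[where ys="de A c"])
    thus ?thesis unfolding X_def by (simp add: antipode_contract_left[OF W F] scale_sum_list[OF W])
  qed
  have "(\<Sum>p\<leftarrow>de A (an A x). F (fst p) (snd p))
      = (\<Sum>p\<leftarrow>de A x. sW (ep A (snd p)) (\<Sum>u\<leftarrow>de A (an A (fst p)). F (fst u) (snd u)))"
    by (rule counit_right[symmetric]) (intro linI W vs F1 F2)+
  also have "\<dots> = (\<Sum>p\<leftarrow>de A x. \<Sum>q\<leftarrow>de A (snd p). Z (fst p) (fst q) (snd q))"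
    by (simp add: contract_right)
  also have "\<dots> = (\<Sum>p\<leftarrow>de A x. \<Sum>q\<leftarrow>de A (fst p). Z (fst q) (snd q) (snd p))"
    by (rule coassoc[OF W Z1 Z2 Z3, symmetric])
  also have "\<dots> = (\<Sum>p\<leftarrow>de A x. sW (ep A (fst p)) (\<Sum>w\<leftarrow>de A (snd p). F (an A (snd w)) (an A (fst w))))"
    by (simp add: contract_left)
  also have "\<dots> = (\<Sum>p\<leftarrow>de A x. F (an A (snd p)) (an A (fst p)))"
    by (rule counit_left) (intro linI W vs F1 F2)+
  finally show ?thesis .
qed

end

locale rb_object = H: hopf H + K: coalg K
  for H :: "('r::field, 'h::ab_group_add) hs" and K :: "('r, 'k::ab_group_add) hs" +
  fixes act :: "'h \<Rightarrow> 'k \<Rightarrow> 'k" and R :: "'k \<Rightarrow> 'h"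
  assumes obj: "obj_C' H K act R"
begin

definition actR :: "'k \<Rightarrow> 'k \<Rightarrow> 'k" where
  "actR a b = act (R a) b"

text \<open>The convolution inverse of \<open>\<alpha>\<^sub>R(a) = act (R a)\<close> is \<open>act (S\<^sub>H (R a))\<close>.\<close>
definition betaR :: "'k \<Rightarrow> 'k \<Rightarrow> 'k" where
  "betaR a b = act (an H (R a)) b"

lemma bimonoid: "is_yd_bimonoid H K act (rho H K R)"
  using obj unfolding obj_C'_def by blast

lemma yd_mod: "is_yd_mod H K act (rho H K R)"
  using bimonoid unfolding is_yd_bimonoid_def by blast

lemma alg_K: "is_alg K"
  using bimonoid unfolding is_yd_bimonoid_def by blast

lemma antipode_K: "is_antipode K (an K)"
  using obj unfolding obj_C'_def by blast

lemma rb: "is_ydrb H K act R"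
  using obj unfolding obj_C'_def by blast

lemma K_mu_lin1: "lin (sc K) (sc K) (\<lambda>x. mu K x y)"
  using alg_K unfolding is_alg_def bilin_def by blast

lemma K_mu_lin2: "lin (sc K) (sc K) (\<lambda>y. mu K x y)"
  using alg_K unfolding is_alg_def bilin_def by blast

lemma K_an_lin: "lin (sc K) (sc K) (an K)"
  using antipode_K unfolding is_antipode_def by blast

lemma act_lin1: "lin (sc H) (sc K) (\<lambda>h. act h v)"
  using yd_mod unfolding is_yd_mod_def bilin_def by blast

lemma act_lin2: "lin (sc K) (sc K) (\<lambda>v. act h v)"
  using yd_mod unfolding is_yd_mod_def bilin_def by blast

lemma act_mu: "act (mu H h h') v = act h (act h' v)"
  using yd_mod unfolding is_yd_mod_def by blast

lemma act_un [simp]: "act (un H) v = v"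
  using yd_mod unfolding is_yd_mod_def by blast

lemma R_coalg_hom: "coalg_hom K H R"
  using rb unfolding is_ydrb_def by blast

lemma R_lin: "lin (sc K) (sc H) R"
  using R_coalg_hom unfolding coalg_hom_def by blast

lemma ep_R [simp]: "ep H (R x) = ep K x"
  using R_coalg_hom unfolding coalg_hom_def by blast

lemma lin_K_mu_left: "lin s0 (sc K) f \<Longrightarrow> lin s0 (sc K) (\<lambda>x. mu K (f x) y)"
  using lin_comp[OF K_mu_lin1] .

lemma lin_K_mu_right: "lin s0 (sc K) f \<Longrightarrow> lin s0 (sc K) (\<lambda>x. mu K y (f x))"
  using lin_comp[OF K_mu_lin2] .

lemma lin_K_an: "lin s0 (sc K) f \<Longrightarrow> lin s0 (sc K) (\<lambda>x. an K (f x))"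
  using lin_comp[OF K_an_lin] .

lemma lin_act_left: "lin s0 (sc H) f \<Longrightarrow> lin s0 (sc K) (\<lambda>x. act (f x) v)"
  using lin_comp[OF act_lin1] .

lemma lin_act_right: "lin s0 (sc K) f \<Longrightarrow> lin s0 (sc K) (\<lambda>x. act h (f x))"
  using lin_comp[OF act_lin2] .

lemma lin_R: "lin s0 (sc K) f \<Longrightarrow> lin s0 (sc H) (\<lambda>x. R (f x))"
  using lin_comp[OF R_lin] .

lemmas linI = H.linI lin_K_mu_left lin_K_mu_right lin_K_an lin_act_left lin_act_right lin_R
  K.lin_sum_de_comp K.lin_ep_scale
lemmas VS = H.vs K.vs vector_space_mult

lemma sum_de_R:
  assumes W: "vector_space sW" and F: "\<And>b. lin (sc H) sW (\<lambda>a. F a b)" "\<And>a. lin (sc H) sW (\<lambda>b. F a b)"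
  shows "(\<Sum>p\<leftarrow>de H (R x). F (fst p) (snd p)) = (\<Sum>p\<leftarrow>de K x. F (R (fst p)) (R (snd p)))"
proof -
  have "teq2 (sc H) (sc H) (de H (R x)) (map (\<lambda>(a,b). (R a, R b)) (de K x))"
    using R_coalg_hom unfolding coalg_hom_def by blast
  from teq2_sum_eq[OF W this F] show ?thesis by (simp add: split_def comp_def)
qed

lemma R_antipode_right: "(\<Sum>t\<leftarrow>de K u. mu H (R (fst t)) (an H (R (snd t)))) = sc H (ep K u) (un H)"
  using sum_de_R[OF H.vs, of "\<lambda>a b. mu H a (an H b)"] by (simp add: H.antipode_right linI VS)

lemma R_antipode_left: "(\<Sum>t\<leftarrow>de K u. mu H (an H (R (fst t))) (R (snd t))) = sc H (ep K u) (un H)"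
  using sum_de_R[OF H.vs, of "\<lambda>a b. mu H (an H a) b"] by (simp add: H.antipode_left linI VS)

lemma R_bul: "R (bul K actR a b) = mu H (R a) (R b)"
  using rb unfolding is_ydrb_def bul_def actR_def by simp

lemma R_un: "R (un K) = un H"
proof -
  let ?g = "R (un K)"
  have de_un: "teq2 (sc K) (sc K) (de K (un K)) [(un K, un K)]"
    using bimonoid unfolding is_yd_bimonoid_def by blast
  have ep_un: "ep K (un K) = 1" and act_un: "act ?g (un K) = sc K (ep H ?g) (un K)"
    using bimonoid unfolding is_yd_bimonoid_def by blast+
  have "mu H ?g ?g = R (bul K actR (un K) (un K))"
    by (rule R_bul[symmetric])
  also have "\<dots> = R (mu K (un K) (act ?g (un K)))"
    unfolding bul_def actR_def using teq2_sum_eq[OF K.vs de_un, of "\<lambda>a b. mu K a (act (R b) (un K))"]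
    by (simp add: split_def linI VS act_lin2)
  finally have idem: "mu H ?g ?g = ?g"
    using alg_K by (simp add: act_un ep_un is_alg_def)
  have "un H = (\<Sum>t\<leftarrow>de K (un K). mu H (an H (R (fst t))) (R (snd t)))"
    by (simp add: R_antipode_left ep_un)
  also have "\<dots> = mu H (an H ?g) ?g"
    using teq2_sum_eq[OF H.vs de_un, of "\<lambda>a b. mu H (an H (R a)) (R b)"] by (simp add: linI VS)
  finally have inv: "mu H (an H ?g) ?g = un H" by simp
  have "?g = mu H (mu H (an H ?g) ?g) ?g" by (simp add: inv)
  also have "\<dots> = un H" by (subst H.mu_assoc) (simp only: idem inv)
  finally show ?thesis .
qed

lemma lin_Sb: "lin s0 (sc K) f \<Longrightarrow> lin s0 (sc K) (\<lambda>x. Sb K betaR (f x))"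
  unfolding Sb_def betaR_def split_def by (intro linI VS)+

lemma mu_act_R_antipode_contract:
  "(\<Sum>q\<leftarrow>de K y. \<Sum>w\<leftarrow>de K (snd q). mu K a (act (mu H (R (fst q)) (an H (R (fst w)))) (an K (snd w))))
    = mu K a (an K y)"
proof -
  define Y where "Y = (\<lambda>b c d. mu K a (act (mu H (R b) (an H (R c))) (an K d)))"
  have Y1: "lin (sc K) (sc K) (\<lambda>b. Y b c d)" for c d unfolding Y_def by (intro linI VS)+
  have Y2: "lin (sc K) (sc K) (\<lambda>c. Y b c d)" for b d unfolding Y_def by (intro linI VS)+
  have Y3: "lin (sc K) (sc K) (\<lambda>d. Y b c d)" for b c unfolding Y_def by (intro linI VS)+
  have Y_contract: "(\<Sum>t\<leftarrow>de K u. Y (fst t) (snd t) d) = sc K (ep K u) (mu K a (an K d))" for u d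
  proof -
    have "(\<Sum>t\<leftarrow>de K u. Y (fst t) (snd t) d)
        = mu K a (act (\<Sum>t\<leftarrow>de K u. mu H (R (fst t)) (an H (R (snd t)))) (an K d))"
      unfolding Y_def by (simp add: lin_sum_list[OF act_lin1] lin_sum_list[OF K_mu_lin2])
    thus ?thesis by (simp add: R_antipode_right lin_scale[OF act_lin1] lin_scale[OF K_mu_lin2])
  qed
  have "(\<Sum>q\<leftarrow>de K y. \<Sum>w\<leftarrow>de K (snd q). mu K a (act (mu H (R (fst q)) (an H (R (fst w)))) (an K (snd w))))
      = (\<Sum>q\<leftarrow>de K y. \<Sum>w\<leftarrow>de K (snd q). Y (fst q) (fst w) (snd w))"
    unfolding Y_def by simp
  also have "\<dots> = (\<Sum>q\<leftarrow>de K y. \<Sum>t\<leftarrow>de K (fst q). Y (fst t) (snd t) (snd q))"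
    by (rule K.coassoc[OF K.vs Y1 Y2 Y3, symmetric])
  also have "\<dots> = (\<Sum>q\<leftarrow>de K y. sc K (ep K (fst q)) (mu K a (an K (snd q))))"
    by (simp add: Y_contract)
  also have "\<dots> = mu K a (an K y)"
    by (rule K.counit_left) (intro linI VS)+
  finally show ?thesis .
qed

text \<open>After coassociativity, \<open>R(x\<^sub>2) S\<^sub>H(R(x\<^sub>3))\<close> contracts to \<open>\<epsilon>(x\<^sub>2)\<close>, leaving the
  antipode identity of \<open>K\<close>.\<close>

lemma bul_Sb_right_inverse: "(\<Sum>p\<leftarrow>de K z. bul K actR (fst p) (Sb K betaR (snd p))) = sc K (ep K z) (un K)"
proof -
  define V where "V = (\<lambda>a b c. \<Sum>w\<leftarrow>de K c. mu K a (act (mu H (R b) (an H (R (fst w)))) (an K (snd w))))"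
  have V1: "lin (sc K) (sc K) (\<lambda>a. V a b c)" for b c unfolding V_def by (intro linI VS)+
  have V2: "lin (sc K) (sc K) (\<lambda>b. V a b c)" for a c unfolding V_def by (intro linI VS)+
  have V3: "lin (sc K) (sc K) (\<lambda>c. V a b c)" for a b unfolding V_def by (intro linI VS)+
  have "(\<Sum>p\<leftarrow>de K z. bul K actR (fst p) (Sb K betaR (snd p)))
      = (\<Sum>p\<leftarrow>de K z. \<Sum>q\<leftarrow>de K (fst p). V (fst q) (snd q) (snd p))"
    unfolding bul_def Sb_def actR_def betaR_def V_def
    by (simp add: lin_sum_list[OF act_lin2] lin_sum_list[OF K_mu_lin2] act_mu split_def)
  also have "\<dots> = (\<Sum>p\<leftarrow>de K z. \<Sum>q\<leftarrow>de K (snd p). V (fst p) (fst q) (snd q))"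
    by (rule K.coassoc[OF K.vs V1 V2 V3])
  also have "\<dots> = (\<Sum>p\<leftarrow>de K z. mu K (fst p) (an K (snd p)))"
    by (simp add: V_def mu_act_R_antipode_contract)
  also have "\<dots> = sc K (ep K z) (un K)"
    using antipode_K unfolding is_antipode_def by (simp add: split_def)
  finally show ?thesis .
qed

text \<open>Applying \<open>R\<close> turns the previous lemma into \<open>R x\<^sub>1 \<cdot> R(S\<^sub>R x\<^sub>2) = \<epsilon>(x) 1\<close>; multiplying
  by \<open>S\<^sub>H(R x)\<close> from the left, in convolution, gives the claim.\<close>

lemma R_Sb: "R (Sb K betaR x) = an H (R x)"
proof -
  have inverse: "(\<Sum>q\<leftarrow>de K y. mu H (R (fst q)) (R (Sb K betaR (snd q)))) = sc H (ep K y) (un H)" for y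
    using arg_cong[OF bul_Sb_right_inverse, of R]
    by (simp add: lin_sum_list[OF R_lin] lin_scale[OF R_lin] R_bul R_un)
  have "an H (R x) = (\<Sum>p\<leftarrow>de K x. sc H (ep K (snd p)) (an H (R (fst p))))"
    by (rule K.counit_right[symmetric]) (intro linI VS)+
  also have "\<dots> = (\<Sum>p\<leftarrow>de K x. mu H (an H (R (fst p))) (sc H (ep K (snd p)) (un H)))"
    by (simp add: H.mu_scale_right)
  also have "\<dots> = (\<Sum>p\<leftarrow>de K x. \<Sum>q\<leftarrow>de K (snd p). mu H (an H (R (fst p))) (mu H (R (fst q)) (R (Sb K betaR (snd q)))))"
    by (simp add: inverse[symmetric] lin_sum_list[OF H.mu_lin2])
  also have "\<dots> = (\<Sum>p\<leftarrow>de K x. \<Sum>q\<leftarrow>de K (fst p). mu H (an H (R (fst q))) (mu H (R (snd q)) (R (Sb K betaR (snd p)))))"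
    by (rule K.coassoc[OF H.vs, symmetric]) (intro linI VS lin_Sb)+
  also have "\<dots> = (\<Sum>p\<leftarrow>de K x. mu H (\<Sum>q\<leftarrow>de K (fst p). mu H (an H (R (fst q))) (R (snd q))) (R (Sb K betaR (snd p))))"
    by (simp add: lin_sum_list[OF H.mu_lin1] H.mu_assoc)
  also have "\<dots> = (\<Sum>p\<leftarrow>de K x. sc H (ep K (fst p)) (R (Sb K betaR (snd p))))"
    by (simp add: R_antipode_left H.mu_scale_left)
  also have "\<dots> = R (Sb K betaR x)"
    by (rule K.counit_left) (intro linI VS lin_Sb)+
  finally show ?thesis by simp
qed

text \<open>Since \<open>R\<close> is injective, it has a linear left inverse, so tensor equalities in \<open>K \<otimes> K\<close>
  may be checked after applying \<open>R \<otimes> R\<close>.\<close>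

lemma teq2_if_R_images_eq:
  assumes eq: "\<And>\<psi>. bilin (sc H) (sc H) (*) \<psi> \<Longrightarrow>
     (\<Sum>p\<leftarrow>xs. \<psi> (R (fst p)) (R (snd p))) = (\<Sum>p\<leftarrow>ys. \<psi> (R (fst p)) (R (snd p)))"
  shows "teq2 (sc K) (sc K) xs ys"
proof -
  have "inj R" using obj unfolding obj_C'_def by blast
  then obtain L where L: "lin (sc H) (sc K) L" "\<And>x. L (R x) = x"
    using lin_inj_left_inverse[OF K.vs H.vs R_lin] by blast
  show ?thesis unfolding teq2_def
  proof safe
    fix \<phi> assume "bilin (sc K) (sc K) (*) \<phi>"
    hence "bilin (sc H) (sc H) (*) (\<lambda>u v. \<phi> (L u) (L v))"
      using L(1) unfolding bilin_def lin_def by simp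
    from eq[OF this] show "(\<Sum>(a, b)\<leftarrow>xs. \<phi> a b) = (\<Sum>(a, b)\<leftarrow>ys. \<phi> a b)"
      by (simp add: L(2) split_def)
  qed
qed

lemma actR_bilin: "bilin (sc K) (sc K) (sc K) actR"
  unfolding bilin_def actR_def by (auto intro!: linI VS act_lin2)

lemma de_actR: "teq2 (sc K) (sc K) (de K (actR x y))
    [(actR x1 y1, actR x2 y2). (x1, x2) \<leftarrow> de K x, (y1, y2) \<leftarrow> de K y]"
  unfolding teq2_def
proof safe
  fix \<phi> :: "'k \<Rightarrow> 'k \<Rightarrow> 'r" assume b: "bilin (sc K) (sc K) (*) \<phi>"
  note P1 = lin_comp[OF bilinD(1)[OF b]] and P2 = lin_comp[OF bilinD(2)[OF b]]
  have "teq2 (sc K) (sc K) (de K (act h a)) [(act h1 a1, act h2 a2). (h1, h2) \<leftarrow> de H h, (a1, a2) \<leftarrow> de K a]"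
    for h a using bimonoid unfolding is_yd_bimonoid_def by blast
  with b have "(\<Sum>(a, b)\<leftarrow>de K (act (R x) y). \<phi> a b)
     = (\<Sum>p\<leftarrow>de H (R x). \<Sum>q\<leftarrow>de K y. \<phi> (act (fst p) (fst q)) (act (snd p) (snd q)))"
    unfolding teq2_def by (simp add: sum_list_concat map_concat comp_def split_def)
  also have "\<dots> = (\<Sum>p\<leftarrow>de K x. \<Sum>q\<leftarrow>de K y. \<phi> (act (R (fst p)) (fst q)) (act (R (snd p)) (snd q)))"
    by (rule sum_de_R[OF vector_space_mult]) (intro linI VS P1 P2)+
  finally show "(\<Sum>(a, b)\<leftarrow>de K (actR x y). \<phi> a b)
      = (\<Sum>(a, b)\<leftarrow>[(actR x1 y1, actR x2 y2). (x1, x2) \<leftarrow> de K x, (y1, y2) \<leftarrow> de K y]. \<phi> a b)"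
    by (simp add: actR_def sum_list_concat map_concat comp_def split_def)
qed

lemma ep_actR: "ep K (actR x y) = ep K x * ep K y"
  using bimonoid unfolding is_yd_bimonoid_def actR_def by simp

lemma actR_mu: "actR x (mu K y z) = (\<Sum>(x1,x2)\<leftarrow>de K x. mu K (actR x1 y) (actR x2 z))"
proof -
  have "act (R x) (mu K y z) = (\<Sum>p\<leftarrow>de H (R x). mu K (act (fst p) y) (act (snd p) z))"
    using bimonoid unfolding is_yd_bimonoid_def by (simp add: split_def)
  also have "\<dots> = (\<Sum>p\<leftarrow>de K x. mu K (act (R (fst p)) y) (act (R (snd p)) z))"
    by (rule sum_de_R[OF K.vs]) (intro linI VS)+
  finally show ?thesis by (simp add: actR_def split_def)
qed

lemma actR_actR: "actR x (actR y z) = actR (bul K actR x y) z"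
  by (simp add: actR_def R_bul act_mu)

lemma actR_betaR_inverse: "(\<Sum>(x1,x2)\<leftarrow>de K x. actR x1 (betaR x2 y)) = sc K (ep K x) y"
proof -
  have "(\<Sum>(x1,x2)\<leftarrow>de K x. actR x1 (betaR x2 y)) = act (\<Sum>t\<leftarrow>de K x. mu H (R (fst t)) (an H (R (snd t)))) y"
    by (simp add: actR_def betaR_def lin_sum_list[OF act_lin1] act_mu split_def)
  thus ?thesis by (simp add: R_antipode_right lin_scale[OF act_lin1])
qed

lemma betaR_actR_inverse: "(\<Sum>(x1,x2)\<leftarrow>de K x. betaR x1 (actR x2 y)) = sc K (ep K x) y"
proof -
  have "(\<Sum>(x1,x2)\<leftarrow>de K x. betaR x1 (actR x2 y)) = act (\<Sum>t\<leftarrow>de K x. mu H (an H (R (fst t))) (R (snd t))) y"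
    by (simp add: actR_def betaR_def lin_sum_list[OF act_lin1] act_mu split_def)
  thus ?thesis by (simp add: R_antipode_left lin_scale[OF act_lin1])
qed

text \<open>(P5) is the bimonoid axiom for \<open>K\<close> with the coaction \<open>rho H K R\<close> written out.\<close>

lemma de_mu_K: "teq2 (sc K) (sc K) (de K (mu K x y))
    [(mu K x1 (actR x2 (betaR x4 y1)), mu K x3 y2). (x1, x2, x3, x4) \<leftarrow> d4 (de K) x, (y1, y2) \<leftarrow> de K y]"
proof -
  have "teq2 (sc K) (sc K) (de K (mu K x y))
      [(mu K a1 (act am b1), mu K a0 b2). (a1, a2) \<leftarrow> de K x, (am, a0) \<leftarrow> rho H K R a2, (b1, b2) \<leftarrow> de K y]"
    using bimonoid unfolding is_yd_bimonoid_def by blast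
  thus ?thesis unfolding teq2_def
    by (simp add: d4_def d3_def rho_def actR_def betaR_def act_mu sum_list_concat map_concat comp_def split_def)
qed

lemma de_Sb: "teq2 (sc K) (sc K) (de K (Sb K betaR x)) [(Sb K betaR x2, Sb K betaR x1). (x1, x2) \<leftarrow> de K x]"
proof (rule teq2_if_R_images_eq)
  fix \<psi> :: "'h \<Rightarrow> 'h \<Rightarrow> 'r" assume b: "bilin (sc H) (sc H) (*) \<psi>"
  note P1 = bilinD(1)[OF b] and P2 = bilinD(2)[OF b]
  have "(\<Sum>p\<leftarrow>de K (Sb K betaR x). \<psi> (R (fst p)) (R (snd p))) = (\<Sum>p\<leftarrow>de H (an H (R x)). \<psi> (fst p) (snd p))"
    by (simp add: sum_de_R[OF vector_space_mult P1 P2, symmetric] R_Sb)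
  also have "\<dots> = (\<Sum>p\<leftarrow>de H (R x). \<psi> (an H (snd p)) (an H (fst p)))"
    by (rule H.de_an[OF vector_space_mult P1 P2])
  also have "\<dots> = (\<Sum>p\<leftarrow>de K x. \<psi> (an H (R (snd p))) (an H (R (fst p))))"
    by (rule sum_de_R[OF vector_space_mult]) (intro linI VS lin_comp[OF P1] lin_comp[OF P2])+
  finally show "(\<Sum>p\<leftarrow>de K (Sb K betaR x). \<psi> (R (fst p)) (R (snd p)))
      = (\<Sum>p\<leftarrow>[(Sb K betaR x2, Sb K betaR x1). (x1, x2) \<leftarrow> de K x]. \<psi> (R (fst p)) (R (snd p)))"
    by (simp add: R_Sb comp_def split_def)
qed

definition rb2_term :: "'k \<Rightarrow> 'k \<Rightarrow> 'k \<Rightarrow> 'k \<Rightarrow> 'h" where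
  "rb2_term a1 b1 a2 b2 = mu H (mu H (an H (R (act (R a1) b1))) (R a2)) (R b2)"

lemma R_lhar: "R (lhar K actR betaR a b)
    = (\<Sum>p\<leftarrow>de K a. \<Sum>q\<leftarrow>de K b. rb2_term (fst p) (fst q) (snd p) (snd q))"
  by (simp add: lhar_def rb2_term_def R_bul R_Sb actR_def lin_sum_list[OF R_lin]
      sum_list_concat map_concat comp_def split_def)

lemma sum_actR_lhar:
  assumes b: "bilin (sc H) (sc H) (*) \<psi>"
  shows "(\<Sum>p\<leftarrow>[(actR x1 y1, lhar K actR betaR x2 y2). (x1, x2) \<leftarrow> de K x, (y1, y2) \<leftarrow> de K y].
            \<psi> (R (fst p)) (R (snd p)))
       = (\<Sum>(u, v)\<leftarrow>[(rb2_term a2 b2 a3 b3, R (act (R a1) b1)). (a1, a2, a3) \<leftarrow> d3 (de K) x, (b1, b2, b3) \<leftarrow> d3 (de K) y].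
            \<psi> v u)"
proof -
  have "(\<Sum>p\<leftarrow>[(actR x1 y1, lhar K actR betaR x2 y2). (x1, x2) \<leftarrow> de K x, (y1, y2) \<leftarrow> de K y].
            \<psi> (R (fst p)) (R (snd p)))
     = (\<Sum>p\<leftarrow>de K x. \<Sum>r\<leftarrow>de K y. \<Sum>q\<leftarrow>de K (snd p). \<Sum>s\<leftarrow>de K (snd r).
          \<psi> (R (act (R (fst p)) (fst r))) (rb2_term (fst q) (fst s) (snd q) (snd s)))"
    by (simp add: R_lhar actR_def lin_sum_list[OF bilinD(2)[OF b]] sum_list_concat map_concat comp_def split_def)
  also have "\<dots> = (\<Sum>p\<leftarrow>de K x. \<Sum>q\<leftarrow>de K (snd p). \<Sum>r\<leftarrow>de K y. \<Sum>s\<leftarrow>de K (snd r).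
          \<psi> (R (act (R (fst p)) (fst r))) (rb2_term (fst q) (fst s) (snd q) (snd s)))"
    by (simp add: sum_list_commute[where xs="de K y"])
  finally show ?thesis
    by (simp add: d3_def sum_list_concat map_concat comp_def split_def)
qed

lemma sum_actR_lhar_flipped:
  assumes b: "bilin (sc H) (sc H) (*) \<psi>"
  shows "(\<Sum>p\<leftarrow>[(actR x2 y2, lhar K actR betaR x1 y1). (x1, x2) \<leftarrow> de K x, (y1, y2) \<leftarrow> de K y].
            \<psi> (R (fst p)) (R (snd p)))
       = (\<Sum>(u, v)\<leftarrow>[(rb2_term a1 b1 a2 b2, R (act (R a3) b3)). (a1, a2, a3) \<leftarrow> d3 (de K) x, (b1, b2, b3) \<leftarrow> d3 (de K) y].
            \<psi> v u)"
proof -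
  note Q1 = lin_comp[OF bilinD(1)[OF b]] and Q2 = lin_comp[OF bilinD(2)[OF b]]
  define G where "G = (\<lambda>a1 a2 a3. \<Sum>r\<leftarrow>de K y. \<Sum>s\<leftarrow>de K (fst r).
      \<psi> (R (act (R a3) (snd r))) (rb2_term a1 (fst s) a2 (snd s)))"
  have G1: "lin (sc K) (*) (\<lambda>a. G a b c)" for b c unfolding G_def rb2_term_def by (intro linI VS Q1 Q2)+
  have G2: "lin (sc K) (*) (\<lambda>b. G a b c)" for a c unfolding G_def rb2_term_def by (intro linI VS Q1 Q2)+
  have G3: "lin (sc K) (*) (\<lambda>c. G a b c)" for a b unfolding G_def rb2_term_def by (intro linI VS Q1 Q2)+
  have coassoc_y: "G a1 a2 a3 = (\<Sum>r\<leftarrow>de K y. \<Sum>s\<leftarrow>de K (snd r).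
      \<psi> (R (act (R a3) (snd s))) (rb2_term a1 (fst r) a2 (fst s)))" for a1 a2 a3
    unfolding G_def rb2_term_def by (rule K.coassoc[OF vector_space_mult]) (intro linI VS Q1 Q2)+
  have "(\<Sum>p\<leftarrow>[(actR x2 y2, lhar K actR betaR x1 y1). (x1, x2) \<leftarrow> de K x, (y1, y2) \<leftarrow> de K y].
            \<psi> (R (fst p)) (R (snd p)))
     = (\<Sum>p\<leftarrow>de K x. \<Sum>q\<leftarrow>de K (fst p). G (fst q) (snd q) (snd p))"
    unfolding G_def
    by (simp add: R_lhar actR_def lin_sum_list[OF bilinD(2)[OF b]] sum_list_concat map_concat comp_def
        split_def sum_list_commute[where xs="de K y"])
  also have "\<dots> = (\<Sum>p\<leftarrow>de K x. \<Sum>q\<leftarrow>de K (snd p). G (fst p) (fst q) (snd q))"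
    by (rule K.coassoc[OF vector_space_mult G1 G2 G3])
  finally show ?thesis
    by (simp add: coassoc_y d3_def sum_list_concat map_concat comp_def split_def)
qed

text \<open>(P6) reduces, after applying \<open>R \<otimes> R\<close>, to (RB2) with its tensor factors swapped.\<close>

lemma actR_lhar_symmetric: "teq2 (sc K) (sc K)
    [(actR x1 y1, lhar K actR betaR x2 y2). (x1, x2) \<leftarrow> de K x, (y1, y2) \<leftarrow> de K y]
    [(actR x2 y2, lhar K actR betaR x1 y1). (x1, x2) \<leftarrow> de K x, (y1, y2) \<leftarrow> de K y]"
proof (rule teq2_if_R_images_eq)
  fix \<psi> :: "'h \<Rightarrow> 'h \<Rightarrow> 'r" assume b: "bilin (sc H) (sc H) (*) \<psi>"
  hence "bilin (sc H) (sc H) (*) (\<lambda>u v. \<psi> v u)" unfolding bilin_def by simp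
  with rb have "(\<Sum>(u, v)\<leftarrow>[(rb2_term a1 b1 a2 b2, R (act (R a3) b3)).
        (a1, a2, a3) \<leftarrow> d3 (de K) x, (b1, b2, b3) \<leftarrow> d3 (de K) y]. \<psi> v u)
      = (\<Sum>(u, v)\<leftarrow>[(rb2_term a2 b2 a3 b3, R (act (R a1) b1)).
        (a1, a2, a3) \<leftarrow> d3 (de K) x, (b1, b2, b3) \<leftarrow> d3 (de K) y]. \<psi> v u)"
    unfolding is_ydrb_def teq2_def rb2_term_def by blast
  thus "(\<Sum>p\<leftarrow>[(actR x1 y1, lhar K actR betaR x2 y2). (x1, x2) \<leftarrow> de K x, (y1, y2) \<leftarrow> de K y].
            \<psi> (R (fst p)) (R (snd p)))
      = (\<Sum>p\<leftarrow>[(actR x2 y2, lhar K actR betaR x1 y1). (x1, x2) \<leftarrow> de K x, (y1, y2) \<leftarrow> de K y].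
            \<psi> (R (fst p)) (R (snd p)))"
    by (simp add: sum_actR_lhar[OF b] sum_actR_lhar_flipped[OF b])
qed

lemma is_ydph_actR: "is_ydph K actR"
proof -
  have "ep K (mu K x y) = ep K x * ep K y" "ep K (un K) = 1" "teq2 (sc K) (sc K) (de K (un K)) [(un K, un K)]"
    for x y using bimonoid unfolding is_yd_bimonoid_def by blast+
  moreover have "lin (sc K) (sc K) (betaR x)" "lin (sc K) (sc K) (\<lambda>x. betaR x y)" for x y
    unfolding betaR_def by (intro linI VS act_lin2)+
  ultimately show ?thesis
    unfolding is_ydph_def
    by (intro conjI allI exI[of _ betaR])
      (simp_all add: alg_K K.coalg antipode_K actR_bilin de_actR ep_actR actR_mu actR_actR
        actR_betaR_inverse betaR_actR_inverse de_mu_K de_Sb actR_lhar_symmetric)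
qed

lemma ydph_hom_of_mor_rb:
  assumes "mor_rb H K act R H2 K2 act2 R2 f g"
  shows "ydph_hom K actR K2 (\<lambda>a b. act2 (R2 a) b) g"
proof -
  have "f (R x) = R2 (g x)" for x using assms unfolding mor_rb_def by (metis comp_apply)
  with assms show ?thesis unfolding mor_rb_def ydph_hom_def actR_def by simp
qed

lemma mor_rb_of_ydph_hom:
  assumes "ydph_hom G actG K actR g"
  shows "mor_rb (subadj G actG) G actG id H K act R (R \<circ> g) g"
proof -
  have ga: "alg_hom G K g" and gc: "coalg_hom G K g" and gact: "\<And>x y. g (actG x y) = actR (g x) (g y)"
    using assms unfolding ydph_hom_def by auto
  have gl: "lin (sc G) (sc K) g" using ga unfolding alg_hom_def by blast
  have gde: "teq2 (sc K) (sc K) (de K (g x)) (map (\<lambda>(a,b). (g a, g b)) (de G x))" for x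
    using gc unfolding coalg_hom_def by blast
  have sub: "sc (subadj G actG) = sc G" "mu (subadj G actG) = bul G actG" "un (subadj G actG) = un G"
    "de (subadj G actG) = de G" "ep (subadj G actG) = ep G"
    by (simp_all add: subadj_def)
  have Rg_lin: "lin (sc G) (sc H) (R \<circ> g)" unfolding comp_def by (rule lin_R[OF gl])
  have g_bul: "g (bul G actG x y) = bul K actR (g x) (g y)" for x y
    using teq2_sum_eq[OF K.vs gde, of "\<lambda>a b. mu K a (actR b (g y))"] ga
    by (simp add: bul_def alg_hom_def lin_sum_list[OF gl] gact split_def comp_def actR_def linI VS act_lin2)
  have "alg_hom (subadj G actG) H (R \<circ> g)"
    using ga Rg_lin unfolding alg_hom_def sub by (simp add: g_bul R_bul R_un)
  moreover have "teq2 (sc H) (sc H) (de H (R (g x))) (map (\<lambda>(a,b). (R (g a), R (g b))) (de G x))" for x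
    unfolding teq2_def
  proof safe
    fix \<phi> :: "'h \<Rightarrow> 'h \<Rightarrow> 'r" assume b: "bilin (sc H) (sc H) (*) \<phi>"
    hence "bilin (sc K) (sc K) (*) (\<lambda>u v. \<phi> (R u) (R v))"
      unfolding bilin_def by (auto intro!: lin_comp[OF bilinD(1)[OF b]] lin_comp[OF bilinD(2)[OF b]] lin_R lin_id)
    with gde[of x] have "(\<Sum>(a, b)\<leftarrow>de K (g x). \<phi> (R a) (R b))
        = (\<Sum>(a, b)\<leftarrow>map (\<lambda>(a,b). (g a, g b)) (de G x). \<phi> (R a) (R b))"
      unfolding teq2_def by blast
    thus "(\<Sum>(a, b)\<leftarrow>de H (R (g x)). \<phi> a b) = (\<Sum>(a, b)\<leftarrow>map (\<lambda>(a,b). (R (g a), R (g b))) (de G x). \<phi> a b)"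
      using sum_de_R[OF vector_space_mult bilinD[OF b]] by (simp add: split_def comp_def)
  qed
  hence "coalg_hom (subadj G actG) H (R \<circ> g)"
    using gc Rg_lin unfolding coalg_hom_def sub by simp
  ultimately show ?thesis
    using ga gc gact unfolding mor_rb_def actR_def by simp
qed

lemma bij_betw_mor_rb_ydph_hom:
  "bij_betw snd {(f, g). mor_rb (subadj G actG) G actG id H K act R f g} {g. ydph_hom G actG K actR g}"
proof -
  have mor_iff: "mor_rb (subadj G actG) G actG id H K act R f g \<longleftrightarrow> f = R \<circ> g \<and> ydph_hom G actG K actR g"
    for f g
    using mor_rb_of_ydph_hom unfolding mor_rb_def ydph_hom_def actR_def by auto
  have "{(f, g). mor_rb (subadj G actG) G actG id H K act R f g} = (\<lambda>g. (R \<circ> g, g)) ` {g. ydph_hom G actG K actR g}"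
    by (auto simp: mor_iff)
  thus ?thesis by (simp add: bij_betw_def inj_on_def image_image)
qed

end

theorem proposition4:
  fixes H :: "('r::field, 'h::ab_group_add) hs" and K :: "('r, 'k::ab_group_add) hs"
    and act :: "'h \<Rightarrow> 'k \<Rightarrow> 'k" and R :: "'k \<Rightarrow> 'h"
    and H2 :: "('r, 'h2::ab_group_add) hs" and K2 :: "('r, 'k2::ab_group_add) hs"
    and act2 :: "'h2 \<Rightarrow> 'k2 \<Rightarrow> 'k2" and R2 :: "'k2 \<Rightarrow> 'h2"
    and G :: "('r, 'g::ab_group_add) hs" and actG :: "'g \<Rightarrow> 'g \<Rightarrow> 'g"
  assumes obj: "obj_C' H K act R"
  shows
    "is_ydph K (\<lambda>a b. act (R a) b)
     \<and> (obj_C' H2 K2 act2 R2 \<longrightarrow> (\<forall>f g. mor_rb H K act R H2 K2 act2 R2 f g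
            \<longrightarrow> ydph_hom K (\<lambda>a b. act (R a) b) K2 (\<lambda>a b. act2 (R2 a) b) g))
     \<and> (is_ydph G actG \<longrightarrow>
          bij_betw snd {(f, g). mor_rb (subadj G actG) G actG id H K act R f g}
                       {g. ydph_hom G actG K (\<lambda>a b. act (R a) b) g}
          \<and> (\<forall>g. ydph_hom G actG K (\<lambda>a b. act (R a) b) g
                 \<longrightarrow> mor_rb (subadj G actG) G actG id H K act R (R \<circ> g) g))"
proof -
  have "is_hopf H" "is_coalg K"
    using obj unfolding obj_C'_def is_yd_bimonoid_def by blast+
  moreover from this have "is_coalg H" unfolding is_hopf_def by blast
  ultimately interpret rb_object H K act R
    by unfold_locales (simp_all add: obj)
  have actR_eq: "actR = (\<lambda>a b. act (R a) b)"
    by (simp add: fun_eq_iff actR_def)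
  show ?thesis
    unfolding actR_eq[symmetric]
    using is_ydph_actR ydph_hom_of_mor_rb bij_betw_mor_rb_ydph_hom mor_rb_of_ydph_hom by blast
qed

end
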